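(* Let $G$ be a structured quadratic-bilinear system given by $(\mathcal C,\mathcal K,\mathcal B,\mathcal N,\mathcal H)$ with structured symmetric subsystem transfer functions $G_k$, and let $\widehat G$ be the reduced-order system obtained by projection with basis matrices $V,W\in\mathbb C^{n\times r}$, with reduced symmetric subsystem transfer functions $\widehat G_k$. Let $\sigma_1,\sigma_2\in\mathbb C$ be such that $\mathcal C,\mathcal K,\mathcal B,\mathcal N,\mathcal H$ can be evaluated at $\sigma_1$, $\sigma_2$, $\sigma_1+\sigma_2$ (resp. at the pairs $(\sigma_1,\sigma_2),(\sigma_2,\sigma_1)$ for $\mathcal H$) and $\mathcal K(\sigma_1),\mathcal K(\sigma_2),\mathcal K(\sigma_1+\sigma_2)$ are invertible. Define $$V_{1,1}=\mathcal K(\sigma_1)^{-1}\mathcal B(\sigma_1),\quad V_{1,2}=\mathcal K(\sigma_2)^{-1}\mathcal B(\sigma_2),$$ $$V_2=\mathcal K(\sigma_1+\sigma_2)^{-1}\big(\mathcal H(\sigma_1,\sigma_2)(V_{1,1}\otimes V_{1,2})+\mathcal H(\sigma_2,\sigma_1)(V_{1,2}\otimes V_{1,1})+\mathcal N(\sigma_1)(I_m\otimes V_{1,1})+\mathcal N(\sigma_2)(I_m\otimes V_{1,2})\big).$$ Suppose $\operatorname{span}(V)\supseteq\operatorname{span}([V_{1,1}\ V_{1,2}\ V_2])$, $V$ has full column rank, and $W\in\mathbb C^{n\times r}$ is an arbitrary full-rank matrix such that $W^{\mathsf H}\mathcal K(s)V$ is invertible for $s\in\{\sigma_1,\sigma_2,\sigma_1+\sigma_2\}$.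 Then $$G_1(\sigma_1)=\widehat G_1(\sigma_1),\qquad G_1(\sigma_2)=\widehat G_1(\sigma_2),\qquad G_2(\sigma_1,\sigma_2)=\widehat G_2(\sigma_1,\sigma_2).$$
   Context: A structured quadratic-bilinear system (in frequency domain) with $n$ states, $m$ inputs and $p$ outputs is given by matrix-valued functions $\mathcal C:\mathbb C\to\mathbb C^{p\times n}$, $\mathcal K:\mathbb C\to\mathbb C^{n\times n}$, $\mathcal B:\mathbb C\to\mathbb C^{n\times m}$, $\mathcal N:\mathbb C\to\mathbb C^{n\times nm}$ with $\mathcal N(s)=[\mathcal N_1(s)\ \cdots\ \mathcal N_m(s)]$, $\mathcal N_j(s)\in\mathbb C^{n\times n}$, and $\mathcal H:\mathbb C\times\mathbb C\to\mathbb C^{n\times n^2}$. Its structured symmetric subsystem transfer functions are $G_1(s_1)=\mathcal C(s_1)g_1(s_1)$, $G_2(s_1,s_2)=\mathcal C(s_1+s_2)g_2(s_1,s_2)$, $G_3(s_1,s_2,s_3)=\mathcal C(s_1+s_2+s_3)g_3(s_1,s_2,s_3)$, where $g_1(s_1)=\mathcal K(s_1)^{-1}\mathcal B(s_1)$, $g_2(s_1,s_2)=\tfrac12\mathcal K(s_1+s_2)^{-1}\big(\mathcal H(s_1,s_2)(g_1(s_1)\otimes g_1(s_2))+\mathcal H(s_2,s_1)(g_1(s_2)\otimes g_1(s_1))+\mathcal N(s_1)(I_m\otimes g_1(s_1))+\mathcal N(s_2)(I_m\otimes g_1(s_2))\big)$, $g_3(s_1,s_2,s_3)=\tfrac16\mathcal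 K(s_1+s_2+s_3)^{-1}\big(\mathcal H(s_1+s_2,s_3)(g_2(s_1,s_2)\otimes g_1(s_3))+\mathcal H(s_1+s_3,s_2)(g_2(s_1,s_3)\otimes g_1(s_2))+\mathcal H(s_2+s_3,s_1)(g_2(s_2,s_3)\otimes g_1(s_1))+\mathcal H(s_1,s_2+s_3)(g_1(s_1)\otimes g_2(s_2,s_3))+\mathcal H(s_2,s_1+s_3)(g_1(s_2)\otimes g_2(s_1,s_3))+\mathcal H(s_3,s_1+s_2)(g_1(s_3)\otimes g_2(s_1,s_2))+\mathcal N(s_1+s_2)(I_m\otimes g_2(s_1,s_2))+\mathcal N(s_1+s_3)(I_m\otimes g_2(s_1,s_3))+\mathcal N(s_2+s_3)(I_m\otimes g_2(s_2,s_3))\big)$, wherever the inverses exist; $\otimes$ is the Kronecker product. The reduced-order system obtained by projection with $V,W\in\mathbb C^{n\times r}$ is given by $\widehat{\mathcal C}(s)=\mathcal C(s)V$, $\widehat{\mathcal K}(s)=W^{\mathsf H}\mathcal K(s)V$, $\widehat{\mathcal B}(s)=W^{\mathsf H}\mathcal B(s)$, $\widehat{\mathcal N}(s)=W^{\mathsf H}\mathcal N(s)(I_m\otimes V)=[W^{\mathsf H}\mathcal N_1(s)V\ \cdots\ W^{\mathsf H}\mathcal N_m(s)V]$, $\widehat{\mathcal H}(s_1,s_2)=W^{\mathsf H}\mathcal H(s_1,s_2)(V\otimes V)$, where $W^{\mathsf H}$ is the conjugate transpose; its transfer functions $\widehat G_k$ are defined by the same formulas with hatted functions (dimension $r$ in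 place of $n$). *)

theory Defs
  imports "Jordan_Normal_Form.Schur_Decomposition" "Jordan_Normal_Form.DL_Rank"
begin

definition kron :: "'a :: times mat \<Rightarrow> 'a mat \<Rightarrow> 'a mat" where
  "kron A B = mat (dim_row A * dim_row B) (dim_col A * dim_col B)
     (\<lambda>(i,j). A $$ (i div dim_row B, j div dim_col B) * B $$ (i mod dim_row B, j mod dim_col B))"

definition mat_inv :: "'a :: semiring_1 mat \<Rightarrow> 'a mat" where
  "mat_inv A = (SOME B. B \<in> carrier_mat (dim_row A) (dim_row A) \<and> inverts_mat A B \<and> inverts_mat B A)"

definition col_span :: "'a :: semiring_1 mat \<Rightarrow> 'a vec set" where
  "col_span M = {M *\<^sub>v x | x. x \<in> carrier_vec (dim_col M)}"

definition hcat3 :: "nat \<Rightarrow> 'a mat \<Rightarrow> 'a mat \<Rightarrow> 'a mat \<Rightarrow> 'a mat" where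
  "hcat3 n A B C = mat_of_cols n (cols A @ cols B @ cols C)"

definition qb_g1 :: "(complex \<Rightarrow> complex mat) \<Rightarrow> (complex \<Rightarrow> complex mat) \<Rightarrow> complex \<Rightarrow> complex mat" where
  "qb_g1 K B s1 = mat_inv (K s1) * B s1"

definition qb_g2 :: "nat \<Rightarrow> (complex \<Rightarrow> complex mat) \<Rightarrow> (complex \<Rightarrow> complex mat)
    \<Rightarrow> (complex \<Rightarrow> complex mat) \<Rightarrow> (complex \<Rightarrow> complex \<Rightarrow> complex mat)
    \<Rightarrow> complex \<Rightarrow> complex \<Rightarrow> complex mat" where
  "qb_g2 m K B N H s1 s2 = (1/2) \<cdot>\<^sub>m (mat_inv (K (s1 + s2)) *
     (H s1 s2 * kron (qb_g1 K B s1) (qb_g1 K B s2)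
      + H s2 s1 * kron (qb_g1 K B s2) (qb_g1 K B s1)
      + N s1 * kron (1\<^sub>m m) (qb_g1 K B s1)
      + N s2 * kron (1\<^sub>m m) (qb_g1 K B s2)))"

definition qb_G1 :: "(complex \<Rightarrow> complex mat) \<Rightarrow> (complex \<Rightarrow> complex mat) \<Rightarrow> (complex \<Rightarrow> complex mat)
    \<Rightarrow> complex \<Rightarrow> complex mat" where
  "qb_G1 C K B s1 = C s1 * qb_g1 K B s1"

definition qb_G2 :: "nat \<Rightarrow> (complex \<Rightarrow> complex mat) \<Rightarrow> (complex \<Rightarrow> complex mat) \<Rightarrow> (complex \<Rightarrow> complex mat)
    \<Rightarrow> (complex \<Rightarrow> complex mat) \<Rightarrow> (complex \<Rightarrow> complex \<Rightarrow> complex mat)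
    \<Rightarrow> complex \<Rightarrow> complex \<Rightarrow> complex mat" where
  "qb_G2 m C K B N H s1 s2 = C (s1 + s2) * qb_g2 m K B N H s1 s2"

definition red_C :: "(complex \<Rightarrow> complex mat) \<Rightarrow> complex mat \<Rightarrow> complex \<Rightarrow> complex mat" where
  "red_C C V s = C s * V"
definition red_K :: "(complex \<Rightarrow> complex mat) \<Rightarrow> complex mat \<Rightarrow> complex mat \<Rightarrow> complex \<Rightarrow> complex mat" where
  "red_K K V W s = mat_adjoint W * K s * V"
definition red_B :: "(complex \<Rightarrow> complex mat) \<Rightarrow> complex mat \<Rightarrow> complex \<Rightarrow> complex mat" where
  "red_B B W s = mat_adjoint W * B s"
definition red_N :: "nat \<Rightarrow> (complex \<Rightarrow> complex mat) \<Rightarrow> complex mat \<Rightarrow> complex mat \<Rightarrow> complex \<Rightarrow> complex mat" where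
  "red_N m N V W s = mat_adjoint W * N s * kron (1\<^sub>m m) V"
definition red_H :: "(complex \<Rightarrow> complex \<Rightarrow> complex mat) \<Rightarrow> complex mat \<Rightarrow> complex mat
    \<Rightarrow> complex \<Rightarrow> complex \<Rightarrow> complex mat" where
  "red_H H V W s1 s2 = mat_adjoint W * H s1 s2 * kron V V"

end

theory Submission
  imports Defs
begin

text \<open>
  The reduced model is a Petrov--Galerkin projection.  If a solution \<open>X\<close> of \<open>K X = R\<close> lies in
  the range of \<open>V\<close>, say \<open>X = V Y\<close>, then \<open>W\<^sup>H R = (W\<^sup>H K V) Y\<close>, so the reduced equation
  \<open>(W\<^sup>H K V) X\<^sub>r = W\<^sup>H R\<close> has the solution \<open>X\<^sub>r = Y\<close> and \<open>V X\<^sub>r = X\<close>.  At \<open>\<sigma>\<^sub>1\<close> and \<open>\<sigma>\<^sub>2\<close>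
  this reproduces \<open>g\<^sub>1\<close>.  By the mixed-product rule \<open>(V \<otimes> V)(Y \<otimes> Y') = V Y \<otimes> V Y'\<close> the
  reduced right-hand side of the equation for \<open>g\<^sub>2\<close> is then \<open>W\<^sup>H\<close> times the full one, and the
  same argument at \<open>\<sigma>\<^sub>1 + \<sigma>\<^sub>2\<close> reproduces \<open>g\<^sub>2\<close>.  Multiplying by \<open>C\<close> gives the interpolation
  conditions.
\<close>

lemma sum_lessThan_mult_nat:
  fixes a b :: nat
  shows "(\<Sum>k<a * b. f k) = (\<Sum>i<a. \<Sum>j<b. (f (i * b + j) :: 'a :: comm_monoid_add))"
proof -
  have "(\<Sum>k<a * b. f k) = (\<Sum>i<a. \<Sum>k = i * b..<i * b + b. f k)"
    using sum.nat_group[where g = f and k = b and n = a] by simp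
  also have "\<dots> = (\<Sum>i<a. \<Sum>j<b. f (i * b + j))"
    by (simp add: sum.atLeastLessThan_shift_0 atLeast0LessThan)
  finally show ?thesis .
qed

lemma kron_carrier_mat:
  assumes "A \<in> carrier_mat a c" and "B \<in> carrier_mat b d"
  shows "kron A B \<in> carrier_mat (a * b) (c * d)"
  using assms by (simp add: kron_def)

lemma kron_mult:
  fixes A C B D :: "'a :: comm_semiring_1 mat"
  assumes A: "A \<in> carrier_mat ra ca" and C: "C \<in> carrier_mat ca cc"
    and B: "B \<in> carrier_mat rb cb" and D: "D \<in> carrier_mat cb cd"
  shows "kron A B * kron C D = kron (A * C) (B * D)"
proof (rule eq_matI)
  fix i j
  assume "i < dim_row (kron (A * C) (B * D))" and "j < dim_col (kron (A * C) (B * D))"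
  then have i: "i < ra * rb" and j: "j < cc * cd"
    using A B C D by (auto simp: kron_def)
  then have "rb > 0" and "cd > 0"
    by (auto intro: Nat.gr0I)
  then have ij: "i div rb < ra" "i mod rb < rb" "j div cd < cc" "j mod cd < cd"
    using i j by (auto simp: less_mult_imp_div_less)
  have "(kron A B * kron C D) $$ (i, j)
      = (\<Sum>k<ca * cb. A $$ (i div rb, k div cb) * B $$ (i mod rb, k mod cb)
          * (C $$ (k div cb, j div cd) * D $$ (k mod cb, j mod cd)))"
    using i j A B C D by (auto simp: kron_def scalar_prod_def intro!: sum.cong)
  also have "\<dots> = (\<Sum>a<ca. \<Sum>b<cb. A $$ (i div rb, a) * B $$ (i mod rb, b)
      * (C $$ (a, j div cd) * D $$ (b, j mod cd)))"
    by (simp add: sum_lessThan_mult_nat)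
  also have "\<dots> = (\<Sum>a<ca. A $$ (i div rb, a) * C $$ (a, j div cd))
      * (\<Sum>b<cb. B $$ (i mod rb, b) * D $$ (b, j mod cd))"
    by (simp add: sum_product ac_simps)
  also have "\<dots> = kron (A * C) (B * D) $$ (i, j)"
    using i j ij A B C D by (simp add: kron_def scalar_prod_def atLeast0LessThan)
  finally show "(kron A B * kron C D) $$ (i, j) = kron (A * C) (B * D) $$ (i, j)" .
qed (use A B C D in \<open>auto simp: kron_def\<close>)

lemma
  fixes A :: "'a :: semiring_1 mat"
  assumes "invertible_mat A" and A: "A \<in> carrier_mat n n"
  shows mat_inv_carrier_mat: "mat_inv A \<in> carrier_mat n n"
    and mat_inv_mult: "mat_inv A * A = 1\<^sub>m n"
    and mult_mat_inv: "A * mat_inv A = 1\<^sub>m n"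
proof -
  obtain B where B: "inverts_mat A B" "inverts_mat B A"
    using assms(1) unfolding invertible_mat_def by blast
  then have "B \<in> carrier_mat n n"
    using A unfolding inverts_mat_def
    by (metis carrier_matD carrier_matI index_mult_mat(3) index_one_mat(3))
  then have "\<exists>B. B \<in> carrier_mat (dim_row A) (dim_row A) \<and> inverts_mat A B \<and> inverts_mat B A"
    using A B by auto
  from someI_ex[OF this] have "mat_inv A \<in> carrier_mat n n"
      and "inverts_mat A (mat_inv A)" and "inverts_mat (mat_inv A) A"
    using A unfolding mat_inv_def by auto
  then show "mat_inv A \<in> carrier_mat n n" "mat_inv A * A = 1\<^sub>m n" "A * mat_inv A = 1\<^sub>m n"
    using A unfolding inverts_mat_def by auto
qed

lemma mat_inv_mult_cancel:
  fixes A X :: "'a :: semiring_1 mat"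
  assumes "invertible_mat A" "A \<in> carrier_mat n n" "X \<in> carrier_mat n k"
  shows "mat_inv A * (A * X) = X"
proof -
  have "mat_inv A * (A * X) = mat_inv A * A * X"
    using assms by (simp add: assoc_mult_mat[OF mat_inv_carrier_mat[OF assms(1,2)]])
  then show ?thesis
    using assms by (simp add: mat_inv_mult)
qed

lemma mult_mat_inv_cancel:
  fixes A X :: "'a :: semiring_1 mat"
  assumes "invertible_mat A" "A \<in> carrier_mat n n" "X \<in> carrier_mat n k"
  shows "A * (mat_inv A * X) = X"
proof -
  have "A * (mat_inv A * X) = A * mat_inv A * X"
    using assms by (simp add: assoc_mult_mat[OF _ mat_inv_carrier_mat[OF assms(1,2)]])
  then show ?thesis
    using assms by (simp add: mult_mat_inv)
qed

lemma col_mem_col_span: "j < dim_col M \<Longrightarrow> col M j \<in> col_span M"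
  unfolding col_span_def
  by (rule CollectI, rule exI[of _ "unit_vec (dim_col M) j"]) auto

lemma set_subset_col_span_mat_of_cols:
  assumes "set vs \<subseteq> carrier_vec n"
  shows "set vs \<subseteq> col_span (mat_of_cols n vs)"
proof
  fix v assume "v \<in> set vs"
  then obtain i where i: "i < length vs" and v: "v = vs ! i"
    by (auto simp: in_set_conv_nth)
  then have "col (mat_of_cols n vs) i = v"
    using assms by (auto intro!: col_mat_of_cols)
  with i show "v \<in> col_span (mat_of_cols n vs)"
    using col_mem_col_span[of i "mat_of_cols n vs"] by simp
qed

lemma set_cols_subset_col_span_hcat3:
  assumes "A \<in> carrier_mat n a" "B \<in> carrier_mat n b" "D \<in> carrier_mat n c"
  shows "set (cols A) \<union> set (cols B) \<union> set (cols D) \<subseteq> col_span (hcat3 n A B D)"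
proof -
  have "set (cols A @ cols B @ cols D) \<subseteq> carrier_vec n"
    using assms cols_dim[of A] cols_dim[of B] cols_dim[of D] by auto
  from set_subset_col_span_mat_of_cols[OF this] show ?thesis
    by (simp add: hcat3_def)
qed

lemma col_span_factor:
  fixes M V :: "'a :: semiring_1 mat"
  assumes M: "M \<in> carrier_mat n k" and V: "V \<in> carrier_mat n r"
    and cols: "set (cols M) \<subseteq> col_span V"
  obtains Y where "Y \<in> carrier_mat r k" and "M = V * Y"
proof -
  have "\<exists>y. y \<in> carrier_vec r \<and> col M j = V *\<^sub>v y" if "j < k" for j
  proof -
    have "col M j \<in> set (cols M)"
      using that M by (simp add: cols_def)
    then show ?thesis
      using cols V unfolding col_span_def by auto
  qed
  then obtain y where y: "\<And>j. j < k \<Longrightarrow> y j \<in> carrier_vec r \<and> col M j = V *\<^sub>v y j"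
    by metis
  define Y where "Y = mat_of_cols r (map y [0..<k])"
  have Y: "Y \<in> carrier_mat r k"
    unfolding Y_def using mat_of_cols_carrier[of r "map y [0..<k]"] by simp
  have "M = V * Y"
  proof (rule mat_col_eqI)
    fix j assume "j < dim_col (V * Y)"
    then have j: "j < k"
      using Y by simp
    then have "col Y j = y j"
      using y[OF j] by (simp add: Y_def)
    then show "col M j = col (V * Y) j"
      using y[OF j] col_mult2[OF V Y j] by simp
  qed (use M V Y in auto)
  then show ?thesis
    by (rule that[OF Y])
qed

lemma col_span_hcat3_factor:
  fixes A B D V :: "'a :: semiring_1 mat"
  assumes A: "A \<in> carrier_mat n a" and B: "B \<in> carrier_mat n b" and D: "D \<in> carrier_mat n c"
    and V: "V \<in> carrier_mat n r" and sub: "col_span (hcat3 n A B D) \<subseteq> col_span V"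
  obtains YA YB YD where "YA \<in> carrier_mat r a" "A = V * YA" "YB \<in> carrier_mat r b" "B = V * YB"
    "YD \<in> carrier_mat r c" "D = V * YD"
proof -
  have cols: "set (cols A) \<union> set (cols B) \<union> set (cols D) \<subseteq> col_span V"
    using set_cols_subset_col_span_hcat3[OF A B D] sub by blast
  obtain YA where "YA \<in> carrier_mat r a" "A = V * YA"
    using col_span_factor[OF A V] cols by blast
  moreover obtain YB where "YB \<in> carrier_mat r b" "B = V * YB"
    using col_span_factor[OF B V] cols by blast
  moreover obtain YD where "YD \<in> carrier_mat r c" "D = V * YD"
    using col_span_factor[OF D V] cols by blast
  ultimately show ?thesis
    using that by blast
qed

lemma projected_solution_eq:
  fixes Wa A V Y :: "'a :: semiring_1 mat"
  assumes Wa: "Wa \<in> carrier_mat r n" and A: "A \<in> carrier_mat n n"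
    and V: "V \<in> carrier_mat n r" and Y: "Y \<in> carrier_mat r k"
    and inv: "invertible_mat (Wa * A * V)"
  shows "mat_inv (Wa * A * V) * (Wa * (A * (V * Y))) = Y"
proof -
  have AV: "A * V \<in> carrier_mat n r" and WaAV: "Wa * A * V \<in> carrier_mat r r"
    using Wa A V by auto
  have "Wa * (A * (V * Y)) = Wa * (A * V * Y)"
    by (simp add: assoc_mult_mat[OF A V Y])
  also have "\<dots> = Wa * (A * V) * Y"
    by (simp add: assoc_mult_mat[OF Wa AV Y])
  also have "\<dots> = Wa * A * V * Y"
    by (simp add: assoc_mult_mat[OF Wa A V])
  finally show ?thesis
    using mat_inv_mult_cancel[OF inv WaAV Y] by simp
qed

lemma mult_add4_distrib_mat:
  fixes A :: "'a :: semiring_0 mat"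
  assumes A: "A \<in> carrier_mat r n"
    and "B1 \<in> carrier_mat n k" "B2 \<in> carrier_mat n k" "B3 \<in> carrier_mat n k" "B4 \<in> carrier_mat n k"
  shows "A * (B1 + B2 + B3 + B4) = A * B1 + A * B2 + A * B3 + A * B4"
  using assms by (simp add: mult_add_distrib_mat[of A r n _ k] del: assoc_add_mat)

lemma mult_kron_mult_kron:
  fixes Wa M A B X Y :: "'a :: comm_semiring_1 mat"
  assumes Wa: "Wa \<in> carrier_mat r n" and M: "M \<in> carrier_mat n (a * b)"
    and A: "A \<in> carrier_mat a c" and B: "B \<in> carrier_mat b d"
    and X: "X \<in> carrier_mat c e" and Y: "Y \<in> carrier_mat d f"
  shows "Wa * M * kron A B * kron X Y = Wa * (M * kron (A * X) (B * Y))"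
proof -
  have AB: "kron A B \<in> carrier_mat (a * b) (c * d)" and XY: "kron X Y \<in> carrier_mat (c * d) (e * f)"
    and AXBY: "kron (A * X) (B * Y) \<in> carrier_mat (a * b) (e * f)"
    using A B X Y by (auto intro!: kron_carrier_mat)
  have WaM: "Wa * M \<in> carrier_mat r (a * b)"
    using Wa M by auto
  have "Wa * M * kron A B * kron X Y = Wa * M * (kron A B * kron X Y)"
    using WaM AB XY by (rule assoc_mult_mat)
  also have "\<dots> = Wa * M * kron (A * X) (B * Y)"
    using kron_mult[OF A X B Y] by simp
  also have "\<dots> = Wa * (M * kron (A * X) (B * Y))"
    using Wa M AXBY by (rule assoc_mult_mat)
  finally show ?thesis .
qed

definition qb_rhs2 :: "nat \<Rightarrow> (complex \<Rightarrow> complex mat) \<Rightarrow> (complex \<Rightarrow> complex mat)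
    \<Rightarrow> (complex \<Rightarrow> complex mat) \<Rightarrow> (complex \<Rightarrow> complex \<Rightarrow> complex mat)
    \<Rightarrow> complex \<Rightarrow> complex \<Rightarrow> complex mat" where
  "qb_rhs2 m K B N H s1 s2 =
     H s1 s2 * kron (qb_g1 K B s1) (qb_g1 K B s2) + H s2 s1 * kron (qb_g1 K B s2) (qb_g1 K B s1)
     + N s1 * kron (1\<^sub>m m) (qb_g1 K B s1) + N s2 * kron (1\<^sub>m m) (qb_g1 K B s2)"

lemma qb_g2_eq_rhs2:
  "qb_g2 m K B N H s1 s2 = (1/2) \<cdot>\<^sub>m (mat_inv (K (s1 + s2)) * qb_rhs2 m K B N H s1 s2)"
  by (simp add: qb_g2_def qb_rhs2_def)

lemma qb_g1_carrier_mat: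
  assumes "K s \<in> carrier_mat n n" "B s \<in> carrier_mat n m" "invertible_mat (K s)"
  shows "qb_g1 K B s \<in> carrier_mat n m"
  using assms mat_inv_carrier_mat[of "K s" n] by (simp add: qb_g1_def)

lemma qb_rhs2_carrier_mat:
  assumes K: "\<And>s. K s \<in> carrier_mat n n" and B: "\<And>s. B s \<in> carrier_mat n m"
    and N: "\<And>s. N s \<in> carrier_mat n (n * m)" and H: "\<And>s1 s2. H s1 s2 \<in> carrier_mat n (n * n)"
    and "invertible_mat (K s1)" "invertible_mat (K s2)"
  shows "qb_rhs2 m K B N H s1 s2 \<in> carrier_mat n (m * m)"
proof -
  have g: "qb_g1 K B s1 \<in> carrier_mat n m" "qb_g1 K B s2 \<in> carrier_mat n m"
    using assms qb_g1_carrier_mat[OF K B] by auto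
  have "N s \<in> carrier_mat n (m * n)" for s
    using N by (simp add: mult.commute)
  moreover have "kron (qb_g1 K B s1) (qb_g1 K B s2) \<in> carrier_mat (n * n) (m * m)"
    "kron (qb_g1 K B s2) (qb_g1 K B s1) \<in> carrier_mat (n * n) (m * m)"
    "kron (1\<^sub>m m) (qb_g1 K B s1) \<in> carrier_mat (m * n) (m * m)"
    "kron (1\<^sub>m m) (qb_g1 K B s2) \<in> carrier_mat (m * n) (m * m)"
    using g by (auto intro: kron_carrier_mat)
  ultimately show ?thesis
    unfolding qb_rhs2_def using H by (meson add_carrier_mat mult_carrier_mat)
qed

lemma mat_adjoint_carrier_mat: "W \<in> carrier_mat n r \<Longrightarrow> mat_adjoint W \<in> carrier_mat r n"
  by (auto simp: mat_adjoint_def)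

lemma qb_g1_reduced:
  fixes V W Y :: "complex mat"
  assumes V: "V \<in> carrier_mat n r" and W: "W \<in> carrier_mat n r"
    and Ks: "K s \<in> carrier_mat n n" and Bs: "B s \<in> carrier_mat n m"
    and inv: "invertible_mat (K s)" and inv_red: "invertible_mat (mat_adjoint W * K s * V)"
    and Y: "Y \<in> carrier_mat r m" and g1: "qb_g1 K B s = V * Y"
  shows "qb_g1 (red_K K V W) (red_B B W) s = Y"
proof -
  have "B s = K s * (V * Y)"
    using g1 mult_mat_inv_cancel[OF inv Ks Bs] by (simp add: qb_g1_def)
  then show ?thesis
    using projected_solution_eq[OF mat_adjoint_carrier_mat[OF W] Ks V Y inv_red]
    by (simp add: qb_g1_def red_K_def red_B_def)
qed

lemma qb_rhs2_reduced:
  fixes V W Y1 Y2 :: "complex mat"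
  assumes V: "V \<in> carrier_mat n r" and W: "W \<in> carrier_mat n r"
    and N: "\<And>s. N s \<in> carrier_mat n (n * m)" and H: "\<And>s1 s2. H s1 s2 \<in> carrier_mat n (n * n)"
    and Y1: "Y1 \<in> carrier_mat r m" and Y2: "Y2 \<in> carrier_mat r m"
    and g1: "qb_g1 K B s1 = V * Y1" "qb_g1 K B s2 = V * Y2"
    and g1_red: "qb_g1 (red_K K V W) (red_B B W) s1 = Y1" "qb_g1 (red_K K V W) (red_B B W) s2 = Y2"
  shows "qb_rhs2 m (red_K K V W) (red_B B W) (red_N m N V W) (red_H H V W) s1 s2
    = mat_adjoint W * qb_rhs2 m K B N H s1 s2"
proof -
  have Wa: "mat_adjoint W \<in> carrier_mat r n"
    using W by (rule mat_adjoint_carrier_mat)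
  have N': "\<And>s. N s \<in> carrier_mat n (m * n)"
    using N by (simp add: mult.commute)
  have VY: "V * Y1 \<in> carrier_mat n m" "V * Y2 \<in> carrier_mat n m"
    using V Y1 Y2 by auto
  have terms:
    "red_H H V W s1 s2 * kron Y1 Y2 = mat_adjoint W * (H s1 s2 * kron (V * Y1) (V * Y2))"
    "red_H H V W s2 s1 * kron Y2 Y1 = mat_adjoint W * (H s2 s1 * kron (V * Y2) (V * Y1))"
    "red_N m N V W s1 * kron (1\<^sub>m m) Y1 = mat_adjoint W * (N s1 * kron (1\<^sub>m m) (V * Y1))"
    "red_N m N V W s2 * kron (1\<^sub>m m) Y2 = mat_adjoint W * (N s2 * kron (1\<^sub>m m) (V * Y2))"
    unfolding red_H_def red_N_def
    using mult_kron_mult_kron[OF Wa H V V Y1 Y2] mult_kron_mult_kron[OF Wa H V V Y2 Y1]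
      mult_kron_mult_kron[OF Wa N' one_carrier_mat V one_carrier_mat Y1]
      mult_kron_mult_kron[OF Wa N' one_carrier_mat V one_carrier_mat Y2]
    by (simp_all add: left_mult_one_mat[OF one_carrier_mat])
  have summands: "H s1 s2 * kron (V * Y1) (V * Y2) \<in> carrier_mat n (m * m)"
    "H s2 s1 * kron (V * Y2) (V * Y1) \<in> carrier_mat n (m * m)"
    "N s1 * kron (1\<^sub>m m) (V * Y1) \<in> carrier_mat n (m * m)"
    "N s2 * kron (1\<^sub>m m) (V * Y2) \<in> carrier_mat n (m * m)"
    using H N' VY by (auto intro!: mult_carrier_mat kron_carrier_mat)
  show ?thesis
    unfolding qb_rhs2_def g1 g1_red terms
    by (rule mult_add4_distrib_mat[OF Wa summands, symmetric])
qed

lemma qb_G2_reduced_eq: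
  fixes V W Y1 Y2 Z :: "complex mat"
  assumes V: "V \<in> carrier_mat n r" and W: "W \<in> carrier_mat n r"
    and C: "C (s1 + s2) \<in> carrier_mat p n"
    and K: "\<And>s. K s \<in> carrier_mat n n" and B: "\<And>s. B s \<in> carrier_mat n m"
    and N: "\<And>s. N s \<in> carrier_mat n (n * m)" and H: "\<And>s1 s2. H s1 s2 \<in> carrier_mat n (n * n)"
    and inv: "invertible_mat (K s1)" "invertible_mat (K s2)" "invertible_mat (K (s1 + s2))"
    and inv_red: "invertible_mat (mat_adjoint W * K (s1 + s2) * V)"
    and Y1: "Y1 \<in> carrier_mat r m" and Y2: "Y2 \<in> carrier_mat r m" and Z: "Z \<in> carrier_mat r (m * m)"
    and g1: "qb_g1 K B s1 = V * Y1" "qb_g1 K B s2 = V * Y2"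
    and g1_red: "qb_g1 (red_K K V W) (red_B B W) s1 = Y1" "qb_g1 (red_K K V W) (red_B B W) s2 = Y2"
    and sol2: "mat_inv (K (s1 + s2)) * qb_rhs2 m K B N H s1 s2 = V * Z"
  shows "qb_G2 m C K B N H s1 s2
    = qb_G2 m (red_C C V) (red_K K V W) (red_B B W) (red_N m N V W) (red_H H V W) s1 s2"
proof -
  have "qb_rhs2 m K B N H s1 s2 \<in> carrier_mat n (m * m)"
    using qb_rhs2_carrier_mat[of K n B m N H s1 s2] K B N H inv by blast
  from mult_mat_inv_cancel[OF inv(3) K this]
  have "qb_rhs2 m K B N H s1 s2 = K (s1 + s2) * (V * Z)"
    unfolding sol2 ..
  then have "qb_g2 m (red_K K V W) (red_B B W) (red_N m N V W) (red_H H V W) s1 s2 = (1/2) \<cdot>\<^sub>m Z"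
    using projected_solution_eq[OF mat_adjoint_carrier_mat[OF W] K V Z inv_red]
    by (simp add: qb_g2_eq_rhs2 qb_rhs2_reduced[OF V W N H Y1 Y2 g1 g1_red] red_K_def)
  moreover have "qb_g2 m K B N H s1 s2 = V * ((1/2) \<cdot>\<^sub>m Z)"
    using sol2 mult_smult_distrib[OF V Z] by (simp add: qb_g2_eq_rhs2)
  moreover have "C (s1 + s2) * (V * ((1/2) \<cdot>\<^sub>m Z)) = C (s1 + s2) * V * ((1/2) \<cdot>\<^sub>m Z)"
    by (rule assoc_mult_mat[OF C V smult_carrier_mat[OF Z], symmetric])
  ultimately show ?thesis
    by (simp add: qb_G2_def red_C_def)
qed

theorem proposition4p1:
  fixes n r m p :: nat
    and C K B N :: "complex \<Rightarrow> complex mat"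
    and H :: "complex \<Rightarrow> complex \<Rightarrow> complex mat"
    and V W :: "complex mat"
    and \<sigma>1 \<sigma>2 :: complex
  assumes dimC: "\<And>s. C s \<in> carrier_mat p n"
    and dimK: "\<And>s. K s \<in> carrier_mat n n"
    and dimB: "\<And>s. B s \<in> carrier_mat n m"
    and dimN: "\<And>s. N s \<in> carrier_mat n (n * m)"
    and dimH: "\<And>s1 s2. H s1 s2 \<in> carrier_mat n (n * n)"
    and dimV: "V \<in> carrier_mat n r"
    and dimW: "W \<in> carrier_mat n r"
    and invK1: "invertible_mat (K \<sigma>1)"
    and invK2: "invertible_mat (K \<sigma>2)"
    and invK12: "invertible_mat (K (\<sigma>1 + \<sigma>2))"
    and span: "let V11 = mat_inv (K \<sigma>1) * B \<sigma>1;
                   V12 = mat_inv (K \<sigma>2) * B \<sigma>2;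
                   V2 = mat_inv (K (\<sigma>1 + \<sigma>2)) *
                          (H \<sigma>1 \<sigma>2 * kron V11 V12 + H \<sigma>2 \<sigma>1 * kron V12 V11
                           + N \<sigma>1 * kron (1\<^sub>m m) V11 + N \<sigma>2 * kron (1\<^sub>m m) V12)
               in col_span (hcat3 n V11 V12 V2) \<subseteq> col_span V"
    and rankV: "vec_space.rank n V = r"
    and rankW: "vec_space.rank n W = r"
    and invKr: "\<And>s. s \<in> {\<sigma>1, \<sigma>2, \<sigma>1 + \<sigma>2} \<Longrightarrow> invertible_mat (mat_adjoint W * K s * V)"
  shows "qb_G1 C K B \<sigma>1 = qb_G1 (red_C C V) (red_K K V W) (red_B B W) \<sigma>1
    \<and> qb_G1 C K B \<sigma>2 = qb_G1 (red_C C V) (red_K K V W) (red_B B W) \<sigma>2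
    \<and> qb_G2 m C K B N H \<sigma>1 \<sigma>2
         = qb_G2 m (red_C C V) (red_K K V W) (red_B B W) (red_N m N V W) (red_H H V W) \<sigma>1 \<sigma>2"
proof -
  let ?g1 = "qb_g1 K B" and ?g1_red = "qb_g1 (red_K K V W) (red_B B W)"
    and ?sol2 = "mat_inv (K (\<sigma>1 + \<sigma>2)) * qb_rhs2 m K B N H \<sigma>1 \<sigma>2"
  have g1: "?g1 \<sigma>1 \<in> carrier_mat n m" "?g1 \<sigma>2 \<in> carrier_mat n m"
    using qb_g1_carrier_mat[OF dimK dimB] invK1 invK2 by auto
  have sol2: "?sol2 \<in> carrier_mat n (m * m)"
    using mat_inv_carrier_mat[OF invK12 dimK] qb_rhs2_carrier_mat[OF dimK dimB dimN dimH invK1 invK2]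
    by auto
  have "col_span (hcat3 n (?g1 \<sigma>1) (?g1 \<sigma>2) ?sol2) \<subseteq> col_span V"
    using span by (simp add: Let_def qb_g1_def qb_rhs2_def)
  then obtain Y1 Y2 Z where Y1: "Y1 \<in> carrier_mat r m" "?g1 \<sigma>1 = V * Y1"
      and Y2: "Y2 \<in> carrier_mat r m" "?g1 \<sigma>2 = V * Y2"
      and Z: "Z \<in> carrier_mat r (m * m)" "?sol2 = V * Z"
    by (rule col_span_hcat3_factor[OF g1 sol2 dimV])
  have g1_red: "?g1_red \<sigma>1 = Y1" "?g1_red \<sigma>2 = Y2"
    using qb_g1_reduced[OF dimV dimW dimK dimB] invK1 invK2 invKr Y1 Y2 by auto
  have "qb_G1 C K B s = qb_G1 (red_C C V) (red_K K V W) (red_B B W) s"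
    if "Y \<in> carrier_mat r m" "?g1 s = V * Y" "?g1_red s = Y" for s Y
    using that by (simp add: qb_G1_def red_C_def assoc_mult_mat[OF dimC dimV])
  then show ?thesis
    using Y1 Y2 g1_red invKr qb_G2_reduced_eq[OF dimV dimW dimC dimK dimB dimN dimH invK1 invK2 invK12
        _ Y1(1) Y2(1) Z(1) Y1(2) Y2(2) g1_red Z(2)]
    by auto
qed

end
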